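(* Let $V$ be a finite family of L-frames all anchored at $D$ from above, $G$ its intersection graph, $\mathcal B,\mathcal R\subseteq V$ disjoint dominating sets of $G$, and $H=(\mathcal B\cup\mathcal R,E')$ the graph defined in the context. Then for every $u\in V$ there exist $b\in\mathcal B$ and $r\in\mathcal R$ with $(b,r)\in E'$ such that both $b$ and $r$ intersect $u$. Consequently, for every $\mathcal B'\subseteq\mathcal B$, the set $(\mathcal B\setminus\mathcal B')\cup N_H(\mathcal B')$ is a dominating set of $G$, where $N_H(\mathcal B')$ is the set of neighbours of $\mathcal B'$ in $H$.
   Context: Fix a line $D$ of slope $-1$. An L-frame is the union of a closed horizontal segment and a closed vertical segment sharing an endpoint, its corner $\mathrm{cor}(\cdot)$; it is anchored at $D$ from above if its corner is on $D$, its horizontal segment goes right and its vertical segment goes up from the corner. Two L-frames are adjacent in $G$ iff they intersect; a dominating set is a set $S$ such that every vertex outside $S$ intersects some member of $S$. The graph $H$: for each $u\in V$, among all pairs $(b,r)\in\mathcal B\times\mathcal R$ such that both $b$ and $r$ intersect $u$ (an L-frame intersects itself), choose one pair minimizing the Euclidean distance between $\mathrm{cor}(b)$ and $\mathrm{cor}(r)$, and put it in $E'$. *)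

theory Defs
  imports Complex_Main
begin

text \<open>An L-frame is represented by its corner, the length of its horizontal
  segment and the length of its vertical segment.  For frames anchored at D from
  above the horizontal segment goes right and the vertical one goes up.\<close>
type_synonym lframe = "(real \<times> real) \<times> real \<times> real"

definition cor :: "lframe \<Rightarrow> real \<times> real" where
  "cor f = fst f"

definition hlen :: "lframe \<Rightarrow> real" where
  "hlen f = fst (snd f)"

definition vlen :: "lframe \<Rightarrow> real" where
  "vlen f = snd (snd f)"

definition lpoints :: "lframe \<Rightarrow> (real \<times> real) set" where
  "lpoints f =
     {(fst (cor f) + t, snd (cor f)) | t. 0 \<le> t \<and> t \<le> hlen f}
   \<union> {(fst (cor f), snd (cor f) + t) | t. 0 \<le> t \<and> t \<le> vlen f}"

text \<open>The line D of slope -1 is {(x,y). x + y = d}.\<close>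
definition anchored_above :: "real \<Rightarrow> lframe \<Rightarrow> bool" where
  "anchored_above d f \<longleftrightarrow> fst (cor f) + snd (cor f) = d \<and> 0 < hlen f \<and> 0 < vlen f"

definition intersects :: "lframe \<Rightarrow> lframe \<Rightarrow> bool" where
  "intersects f g \<longleftrightarrow> lpoints f \<inter> lpoints g \<noteq> {}"

definition dominating_set :: "lframe set \<Rightarrow> lframe set \<Rightarrow> bool" where
  "dominating_set V S \<longleftrightarrow> S \<subseteq> V \<and> (\<forall>v \<in> V - S. \<exists>s \<in> S. intersects s v)"

definition eucl_dist :: "real \<times> real \<Rightarrow> real \<times> real \<Rightarrow> real" where
  "eucl_dist p q = sqrt ((fst p - fst q)^2 + (snd p - snd q)^2)"

text \<open>sel u is the pair (b,r) chosen for u in the definition of H; E' = sel ` V.\<close>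
definition H_selection ::
  "lframe set \<Rightarrow> lframe set \<Rightarrow> lframe set \<Rightarrow> (lframe \<Rightarrow> lframe \<times> lframe) \<Rightarrow> bool" where
  "H_selection V B R sel \<longleftrightarrow>
     (\<forall>u \<in> V. fst (sel u) \<in> B \<and> snd (sel u) \<in> R \<and>
        intersects (fst (sel u)) u \<and> intersects (snd (sel u)) u \<and>
        (\<forall>b \<in> B. \<forall>r \<in> R. intersects b u \<and> intersects r u \<longrightarrow>
            eucl_dist (cor (fst (sel u))) (cor (snd (sel u))) \<le> eucl_dist (cor b) (cor r)))"

definition nbhd :: "(lframe \<times> lframe) set \<Rightarrow> lframe set \<Rightarrow> lframe set" where
  "nbhd E X = {v. \<exists>x \<in> X. (x, v) \<in> E \<or> (v, x) \<in> E}"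

end

theory Submission
  imports Defs
begin

text \<open>Hence, when blue vertices B' are dropped, a vertex
  whose selected blue end lies in B' is still dominated by the red end, which is an
  H-neighbour of B'.\<close>

lemma nbhd_subset:
  assumes "E \<subseteq> A \<times> A"
  shows "nbhd E X \<subseteq> A"
  using assms unfolding nbhd_def by blast

lemma H_selection_edge:
  assumes "H_selection V B R sel" and "u \<in> V"
  shows "fst (sel u) \<in> B" "snd (sel u) \<in> R"
    and "intersects (fst (sel u)) u" "intersects (snd (sel u)) u"
  using assms unfolding H_selection_def by blast+

lemma H_selection_edges_subset:
  assumes "H_selection V B R sel"
  shows "sel ` V \<subseteq> B \<times> R"
proof
  fix e assume "e \<in> sel ` V"
  then obtain u where "u \<in> V" "e = sel u" by blast
  then show "e \<in> B \<times> R" using H_selection_edge[OF assms] by (simp add: mem_Times_iff)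
qed

lemma H_selection_edge_dominates:
  assumes "H_selection V B R sel" and "u \<in> V"
  shows "\<exists>b \<in> B. \<exists>r \<in> R. (b, r) \<in> sel ` V \<and> intersects b u \<and> intersects r u"
proof -
  have "(fst (sel u), snd (sel u)) \<in> sel ` V" using \<open>u \<in> V\<close> by simp
  then show ?thesis using H_selection_edge[OF assms] by blast
qed

lemma dominating_set_exchange:
  assumes "B \<subseteq> V" and "R \<subseteq> V" and "E \<subseteq> B \<times> R"
    and "\<forall>u \<in> V. \<exists>b \<in> B. \<exists>r \<in> R. (b, r) \<in> E \<and> intersects b u \<and> intersects r u"
  shows "dominating_set V ((B - B') \<union> nbhd E B')"
  unfolding dominating_set_def
proof (intro conjI ballI)
  have "nbhd E B' \<subseteq> V" using assms(1-3) by (intro nbhd_subset) blast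
  then show "(B - B') \<union> nbhd E B' \<subseteq> V" using assms(1) by blast
next
  fix u assume "u \<in> V - ((B - B') \<union> nbhd E B')"
  then obtain b r where "b \<in> B" "(b, r) \<in> E" "intersects b u" "intersects r u"
    using assms(4) by blast
  show "\<exists>s \<in> (B - B') \<union> nbhd E B'. intersects s u"
  proof (cases "b \<in> B'")
    case True
    then have "r \<in> nbhd E B'" using \<open>(b, r) \<in> E\<close> unfolding nbhd_def by blast
    then show ?thesis using \<open>intersects r u\<close> by blast
  next
    case False
    then show ?thesis using \<open>b \<in> B\<close> \<open>intersects b u\<close> by blast
  qed
qed

theorem mainTheorem5:
  fixes d :: real and V B R :: "lframe set" and sel :: "lframe \<Rightarrow> lframe \<times> lframe"
  assumes "finite V"
    and "\<forall>f \<in> V. anchored_above d f"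
    and "dominating_set V B" and "dominating_set V R"
    and "B \<inter> R = {}"
    and "H_selection V B R sel"
  shows "(\<forall>u \<in> V. \<exists>b \<in> B. \<exists>r \<in> R. (b, r) \<in> sel ` V \<and> intersects b u \<and> intersects r u)
       \<and> (\<forall>B' \<subseteq> B. dominating_set V ((B - B') \<union> nbhd (sel ` V) B'))"
proof
  show edges: "\<forall>u \<in> V. \<exists>b \<in> B. \<exists>r \<in> R. (b, r) \<in> sel ` V \<and> intersects b u \<and> intersects r u"
    using H_selection_edge_dominates[OF assms(6)] by blast
  have "B \<subseteq> V" "R \<subseteq> V" using assms(3,4) unfolding dominating_set_def by auto
  then show "\<forall>B' \<subseteq> B. dominating_set V ((B - B') \<union> nbhd (sel ` V) B')"
    using dominating_set_exchange H_selection_edges_subset[OF assms(6)] edges by blast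
qed

end
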